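(* For a random subcomplex $X$ of $\triangle_n$ the following are equivalent: (1) $X$ is spatially independent; (2) for all $Y_1,Y_2\in S_n$ with $\mathbb{P}(Y_2\subset X)>0$, $\mathbb{P}(Y_1\subset X\mid Y_2\subset X)=\mathbb{P}(Y_1\subset X\mid Y_1\cap Y_2\subset X)$; (3) for all $Y_1,Y_2\in S_n$ with $\mathbb{P}(Y_1\cap Y_2\subset X)>0$, $\mathbb{P}(Y_1\cup Y_2\subset X\mid Y_1\cap Y_2\subset X)=\mathbb{P}(Y_1\subset X\mid Y_1\cap Y_2\subset X)\,\mathbb{P}(Y_2\subset X\mid Y_1\cap Y_2\subset X)$; (4) for all $Y_1,Y_2,Z\in S_n$ with $Y_1\cap Y_2\subset Z$ and $\mathbb{P}(Z\subset X)>0$, $\mathbb{P}(Y_1\cup Y_2\subset X\mid Z\subset X)=\mathbb{P}(Y_1\subset X\mid Z\subset X)\,\mathbb{P}(Y_2\subset X\mid Z\subset X)$.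
   Context: $\triangle_n=2^{[n]}$; $S_n$ is the set of subcomplexes of $\triangle_n$ (families of subsets of $[n]$ closed under taking subsets); a random subcomplex is an $S_n$-valued random variable. $X$ is spatially independent if $\mathbb{P}(Y_1\cup Y_2\subset X)\,\mathbb{P}(Y_1\cap Y_2\subset X)=\mathbb{P}(Y_1\subset X)\,\mathbb{P}(Y_2\subset X)$ for all $Y_1,Y_2\in S_n$. *)

theory Defs
  imports "HOL-Probability.Probability"
begin

definition full_simplex :: "nat \<Rightarrow> nat set set" where
  "full_simplex n = Pow {1..n}"

definition subcomplexes :: "nat \<Rightarrow> nat set set set" where
  "subcomplexes n = {K. K \<subseteq> full_simplex n \<and> (\<forall>\<sigma>\<in>K. \<forall>\<tau>. \<tau> \<subseteq> \<sigma> \<longrightarrow> \<tau> \<in> K)}"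

text \<open>A random subcomplex of the n-simplex: a probability distribution on S_n
  (S_n is finite, so every distribution is a pmf).\<close>
definition random_subcomplex :: "nat \<Rightarrow> nat set set pmf \<Rightarrow> bool" where
  "random_subcomplex n X \<longleftrightarrow> set_pmf X \<subseteq> subcomplexes n"

definition contains_ev :: "nat set set \<Rightarrow> nat set set set" where
  "contains_ev Y = {K. Y \<subseteq> K}"

definition Pc :: "nat set set pmf \<Rightarrow> nat set set \<Rightarrow> real" where
  "Pc X Y = measure_pmf.prob X (contains_ev Y)"

definition Pcond :: "nat set set pmf \<Rightarrow> nat set set \<Rightarrow> nat set set \<Rightarrow> real" where
  "Pcond X Y Z = measure_pmf.prob X (contains_ev Y \<inter> contains_ev Z) / Pc X Z"

definition spatially_independent :: "nat \<Rightarrow> nat set set pmf \<Rightarrow> bool" where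
  "spatially_independent n X \<longleftrightarrow>
     (\<forall>Y1\<in>subcomplexes n. \<forall>Y2\<in>subcomplexes n.
        Pc X (Y1 \<union> Y2) * Pc X (Y1 \<inter> Y2) = Pc X Y1 * Pc X Y2)"

end

theory Submission
  imports Defs
begin

text \<open>Since containment events satisfy (Y \<subseteq> X and Z \<subseteq> X) = (Y \<union> Z \<subseteq> X), every conditional
  probability is a ratio of two values of Pc, and each condition (2)--(4) is the defining
  identity of spatial independence divided by a positive normalising factor. Whenever that
  factor vanishes, the identity holds trivially because Pc is antitone. For (4), spatial
  independence is applied to Y1 \<union> Z and Y2 \<union> Z, whose intersection is Z once Y1 \<inter> Y2 \<subseteq> Z.\<close>

lemma subcomplexes_Un:
  "A \<in> subcomplexes n \<Longrightarrow> B \<in> subcomplexes n \<Longrightarrow> A \<union> B \<in> subcomplexes n"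
  unfolding subcomplexes_def by auto

lemma subcomplexes_Int:
  "A \<in> subcomplexes n \<Longrightarrow> B \<in> subcomplexes n \<Longrightarrow> A \<inter> B \<in> subcomplexes n"
  unfolding subcomplexes_def by auto

lemma Pc_nonneg: "0 \<le> Pc X Y"
  unfolding Pc_def by simp

lemma Pc_antimono: "Y \<subseteq> Y' \<Longrightarrow> Pc X Y' \<le> Pc X Y"
  unfolding Pc_def contains_ev_def
  by (rule measure_pmf.finite_measure_mono) auto

lemma Pcond_eq_Pc_Un: "Pcond X Y Z = Pc X (Y \<union> Z) / Pc X Z"
proof -
  have "contains_ev Y \<inter> contains_ev Z = contains_ev (Y \<union> Z)"
    unfolding contains_ev_def by auto
  then show ?thesis
    unfolding Pcond_def Pc_def by simp
qed

definition spatial_identity :: "nat set set pmf \<Rightarrow> nat set set \<Rightarrow> nat set set \<Rightarrow> bool" where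
  "spatial_identity X Y1 Y2 \<longleftrightarrow> Pc X (Y1 \<union> Y2) * Pc X (Y1 \<inter> Y2) = Pc X Y1 * Pc X Y2"

lemma spatially_independent_iff_spatial_identity:
  "spatially_independent n X \<longleftrightarrow>
    (\<forall>Y1\<in>subcomplexes n. \<forall>Y2\<in>subcomplexes n. spatial_identity X Y1 Y2)"
  unfolding spatially_independent_def spatial_identity_def ..

lemma spatial_identity_if_Pc_eq_0:
  assumes "Pc X Y2 = 0"
  shows "spatial_identity X Y1 Y2"
proof -
  have "Pc X (Y1 \<union> Y2) \<le> Pc X Y2"
    by (rule Pc_antimono) auto
  with assms Pc_nonneg[of X "Y1 \<union> Y2"] have "Pc X (Y1 \<union> Y2) = 0"
    by linarith
  with assms show ?thesis
    unfolding spatial_identity_def by simp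
qed

lemma Pc_Int_pos_if_Pc_pos: "Pc X Y2 > 0 \<Longrightarrow> Pc X (Y1 \<inter> Y2) > 0"
  using Pc_antimono[of "Y1 \<inter> Y2" Y2 X] by auto

lemma spatially_independent_iff_identity_where:
  assumes pos: "\<And>Y1 Y2. Pc X Y2 > 0 \<Longrightarrow> P Y1 Y2"
  shows "spatially_independent n X \<longleftrightarrow>
    (\<forall>Y1\<in>subcomplexes n. \<forall>Y2\<in>subcomplexes n. P Y1 Y2 \<longrightarrow> spatial_identity X Y1 Y2)"
proof
  assume "\<forall>Y1\<in>subcomplexes n. \<forall>Y2\<in>subcomplexes n. P Y1 Y2 \<longrightarrow> spatial_identity X Y1 Y2"
  then have "spatial_identity X Y1 Y2" if "Y1 \<in> subcomplexes n" "Y2 \<in> subcomplexes n" for Y1 Y2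
    using that pos spatial_identity_if_Pc_eq_0 Pc_nonneg[of X Y2]
    by (cases "Pc X Y2 = 0") auto
  then show "spatially_independent n X"
    unfolding spatially_independent_iff_spatial_identity by blast
qed (simp add: spatially_independent_iff_spatial_identity)

lemma Pcond_eq_Pcond_Int_iff:
  assumes "Pc X Y2 > 0"
  shows "Pcond X Y1 Y2 = Pcond X Y1 (Y1 \<inter> Y2) \<longleftrightarrow> spatial_identity X Y1 Y2"
proof -
  have "Pc X (Y1 \<inter> Y2) > 0"
    by (rule Pc_Int_pos_if_Pc_pos[OF assms])
  moreover have "Y1 \<union> (Y1 \<inter> Y2) = Y1"
    by auto
  ultimately show ?thesis
    using assms unfolding Pcond_eq_Pc_Un spatial_identity_def by (simp add: frac_eq_eq)
qed

lemma divide_eq_divide_mult_divide_iff: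
  "(d::real) > 0 \<Longrightarrow> a / d = (b / d) * (c / d) \<longleftrightarrow> a * d = b * c"
  by (simp add: field_simps)

lemma Pcond_Un_eq_mult_iff:
  assumes "Pc X (Y1 \<inter> Y2) > 0"
  shows "Pcond X (Y1 \<union> Y2) (Y1 \<inter> Y2) = Pcond X Y1 (Y1 \<inter> Y2) * Pcond X Y2 (Y1 \<inter> Y2)
    \<longleftrightarrow> spatial_identity X Y1 Y2"
proof -
  have "Y1 \<union> (Y1 \<inter> Y2) = Y1" "Y2 \<union> (Y1 \<inter> Y2) = Y2" "Y1 \<union> Y2 \<union> (Y1 \<inter> Y2) = Y1 \<union> Y2"
    by auto
  then show ?thesis
    unfolding Pcond_eq_Pc_Un spatial_identity_def
    by (simp only: divide_eq_divide_mult_divide_iff[OF assms])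
qed

lemma Pcond_Un_eq_mult_if_spatially_independent:
  assumes "spatially_independent n X"
    and "Y1 \<in> subcomplexes n" "Y2 \<in> subcomplexes n" "Z \<in> subcomplexes n"
    and "Y1 \<inter> Y2 \<subseteq> Z" "Pc X Z > 0"
  shows "Pcond X (Y1 \<union> Y2) Z = Pcond X Y1 Z * Pcond X Y2 Z"
proof -
  have "Y1 \<union> Z \<in> subcomplexes n" "Y2 \<union> Z \<in> subcomplexes n"
    using assms(2-4) by (auto intro: subcomplexes_Un)
  with assms(1) have "spatial_identity X (Y1 \<union> Z) (Y2 \<union> Z)"
    unfolding spatially_independent_iff_spatial_identity by blast
  moreover have "(Y1 \<union> Z) \<union> (Y2 \<union> Z) = Y1 \<union> Y2 \<union> Z" "(Y1 \<union> Z) \<inter> (Y2 \<union> Z) = Z"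
    using assms(5) by auto
  ultimately have "Pc X (Y1 \<union> Y2 \<union> Z) * Pc X Z = Pc X (Y1 \<union> Z) * Pc X (Y2 \<union> Z)"
    unfolding spatial_identity_def by simp
  then show ?thesis
    unfolding Pcond_eq_Pc_Un by (simp only: divide_eq_divide_mult_divide_iff[OF assms(6)])
qed

theorem lemma3p1:
  fixes n :: nat and X :: "nat set set pmf"
  assumes "random_subcomplex n X"
  shows "(spatially_independent n X \<longleftrightarrow>
            (\<forall>Y1\<in>subcomplexes n. \<forall>Y2\<in>subcomplexes n. Pc X Y2 > 0 \<longrightarrow>
               Pcond X Y1 Y2 = Pcond X Y1 (Y1 \<inter> Y2)))
       \<and> (spatially_independent n X \<longleftrightarrow>
            (\<forall>Y1\<in>subcomplexes n. \<forall>Y2\<in>subcomplexes n. Pc X (Y1 \<inter> Y2) > 0 \<longrightarrow>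
               Pcond X (Y1 \<union> Y2) (Y1 \<inter> Y2) = Pcond X Y1 (Y1 \<inter> Y2) * Pcond X Y2 (Y1 \<inter> Y2)))
       \<and> (spatially_independent n X \<longleftrightarrow>
            (\<forall>Y1\<in>subcomplexes n. \<forall>Y2\<in>subcomplexes n. \<forall>Z\<in>subcomplexes n.
               Y1 \<inter> Y2 \<subseteq> Z \<longrightarrow> Pc X Z > 0 \<longrightarrow>
               Pcond X (Y1 \<union> Y2) Z = Pcond X Y1 Z * Pcond X Y2 Z))"
    (is "(_ \<longleftrightarrow> ?cond2) \<and> (_ \<longleftrightarrow> ?cond3) \<and> (_ \<longleftrightarrow> ?cond4)")
proof -
  have "spatially_independent n X \<longleftrightarrow> (\<forall>Y1\<in>subcomplexes n. \<forall>Y2\<in>subcomplexes n.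
      Pc X Y2 > 0 \<longrightarrow> spatial_identity X Y1 Y2)"
    by (rule spatially_independent_iff_identity_where)
  then have iff2: "spatially_independent n X \<longleftrightarrow> ?cond2"
    by (simp add: Pcond_eq_Pcond_Int_iff)
  have "spatially_independent n X \<longleftrightarrow> (\<forall>Y1\<in>subcomplexes n. \<forall>Y2\<in>subcomplexes n.
      Pc X (Y1 \<inter> Y2) > 0 \<longrightarrow> spatial_identity X Y1 Y2)"
    by (rule spatially_independent_iff_identity_where) (rule Pc_Int_pos_if_Pc_pos)
  then have iff3: "spatially_independent n X \<longleftrightarrow> ?cond3"
    by (simp add: Pcond_Un_eq_mult_iff)
  have "?cond4 \<Longrightarrow> ?cond3"
    by (metis subcomplexes_Int order_refl)
  then have iff4: "spatially_independent n X \<longleftrightarrow> ?cond4"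
    using iff3 Pcond_Un_eq_mult_if_spatially_independent by blast
  from iff2 iff3 iff4 show ?thesis
    by blast
qed

end
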